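(* Let $\mathbb{F}=\mathbb{C}$, let $N\ge2$, $M\ge2$ and $Q$ be integers with $1\le Q\le M-1$, write $\mathcal{M}=\{1,\dots,M\}$, let $0<\epsilon<1$, and let $\mathbf{H}_1,\dots,\mathbf{H}_M$ be $N\times N$ complex Hermitian positive semidefinite matrices. Let $v^{\min}_{\rm QP}$ be the optimal value of (P1): minimize $\|\mathbf{w}\|^2$ over $\mathbf{w}\in\mathbb{C}^N$, $\boldsymbol\beta\in\{0,1\}^M$ subject to $\mathbf{w}^H\mathbf{H}_i\mathbf{w}\ge\beta_i+(1-\beta_i)\epsilon$ ($i\in\mathcal{M}$) and $\sum_i\beta_i=Q$; and let $v^{\min}_{\rm SDP2}$ be the optimal value of (SDP2): minimize $\mathrm{Tr}[\mathbf{X}]$ over Hermitian $N\times N$ matrices $\mathbf{X}\succeq0$ and $\boldsymbol\beta\in\mathbb{R}^M$ subject to $\mathrm{Tr}[\mathbf{H}_i\mathbf{X}]\ge\beta_i+(1-\beta_i)\epsilon$ ($i\in\mathcal{M}$), $\sum_i\beta_i=Q$, $0\le\beta_i\le1$. Then $v^{\min}_{\rm QP}\le\bar\mu_{\mathbb{C}}\,v^{\min}_{\rm SDP2}$ with $$\bar\mu_{\mathbb{C}}=\max\left\{8\Big[M-Q+\frac{1}{c(\epsilon)}Q\Big],\ \frac{24(\sqrt{M}-1)^2}{c(\epsilon)}\right\},$$ where $c(\epsilon)=\epsilon+\frac{1-\epsilon}{M-Q+1}$.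
   Context: ${}^H$ denotes conjugate transpose. *)

theory Defs
  imports "HOL-Analysis.Analysis"
begin

definition cmat_adj :: "complex^'n^'n \<Rightarrow> complex^'n^'n" where
  "cmat_adj A = (\<chi> i j. cnj (A $ j $ i))"

definition hermitian_mat :: "complex^'n^'n \<Rightarrow> bool" where
  "hermitian_mat A \<longleftrightarrow> cmat_adj A = A"

definition qform :: "complex^'n^'n \<Rightarrow> complex^'n \<Rightarrow> complex" where
  "qform A w = (\<Sum>i\<in>UNIV. \<Sum>j\<in>UNIV. cnj (w $ i) * A $ i $ j * w $ j)"

(* Hermitian positive semidefinite: Hermitian and w^H A w >= 0 for all w
   (for Hermitian A the quadratic form is real) *)
definition psd_mat :: "complex^'n^'n \<Rightarrow> bool" where
  "psd_mat A \<longleftrightarrow> hermitian_mat A \<and> (\<forall>w. 0 \<le> Re (qform A w))"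

(* optimal value of (P1), indices 0..M-1; Inf {} = \<infinity> *)
definition v_QP :: "nat \<Rightarrow> nat \<Rightarrow> real \<Rightarrow> (nat \<Rightarrow> complex^'n^'n) \<Rightarrow> ereal" where
  "v_QP M Q \<epsilon> H = Inf {ereal ((norm w)\<^sup>2) | w \<beta>.
      (\<forall>i<M. \<beta> i \<in> {0,1}) \<and>
      (\<forall>i<M. Re (qform (H i) w) \<ge> \<beta> i + (1 - \<beta> i) * \<epsilon>) \<and>
      (\<Sum>i<M. \<beta> i) = real Q}"

definition v_SDP2 :: "nat \<Rightarrow> nat \<Rightarrow> real \<Rightarrow> (nat \<Rightarrow> complex^'n^'n) \<Rightarrow> ereal" where
  "v_SDP2 M Q \<epsilon> H = Inf {ereal (Re (trace X)) | (X :: complex^'n^'n) \<beta>.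
      psd_mat X \<and>
      (\<forall>i<M. Re (trace (H i ** X)) \<ge> \<beta> i + (1 - \<beta> i) * \<epsilon>) \<and>
      (\<Sum>i<M. \<beta> i) = real Q \<and>
      (\<forall>i<M. 0 \<le> \<beta> i \<and> \<beta> i \<le> 1)}"

definition c_eps :: "nat \<Rightarrow> nat \<Rightarrow> real \<Rightarrow> real" where
  "c_eps M Q \<epsilon> = \<epsilon> + (1 - \<epsilon>) / (real M - real Q + 1)"

definition mu_C :: "nat \<Rightarrow> nat \<Rightarrow> real \<Rightarrow> real" where
  "mu_C M Q \<epsilon> = max (8 * (real M - real Q + real Q / c_eps M Q \<epsilon>))
                      (24 * (sqrt (real M) - 1)\<^sup>2 / c_eps M Q \<epsilon>)"

end

theory Submission
  imports Defs "HOL-Probability.Distributions" "HOL-Probability.Infinite_Product_Measure"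
begin

(* Write an SDP solution as X = \<Sum> v v\<^sup>H over pairwise orthogonal v and draw
   w = \<Sum> \<xi>\<^sub>v v with independent standard complex Gaussians \<xi>\<^sub>v, so that
   E |w|\<^sup>2 = tr X and E w\<^sup>H H\<^sub>i w = tr (H\<^sub>i X).  A Chernoff bound, obtained by integrating
   out one coordinate at a time (each step is a Gaussian integral that replaces H\<^sub>i by a
   rank-one update), shows that w\<^sup>H H\<^sub>i w < a\<^sub>i tr (H\<^sub>i X) |w|\<^sup>2 / tr X has probability at
   most 4 a\<^sub>i.  If \<Sum> 4 a\<^sub>i < 1, some sample satisfies every constraint, and rescaling it to
   |w|\<^sup>2 = \<mu> tr X with a\<^sub>i = d\<^sub>i / \<mu> gives w\<^sup>H H\<^sub>i w > d\<^sub>i tr (H\<^sub>i X) whenever \<mu> \<ge> 8 \<Sum> d\<^sub>i.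
   Since \<Sum> \<beta>\<^sub>i = Q with 0 \<le> \<beta>\<^sub>i \<le> 1, at least Q constraints have tr (H\<^sub>i X) \<ge> c(\<epsilon>);
   choosing d\<^sub>i = 1 / c(\<epsilon>) on Q of them and d\<^sub>i = 1 elsewhere makes w feasible for (P1),
   with \<mu> the first term of the maximum defining \<mu>\<^sub>\<complex>. *)

section \<open>Hermitian forms on complex vectors\<close>

definition cinner :: "complex^'n \<Rightarrow> complex^'n \<Rightarrow> complex" where
  "cinner u v = (\<Sum>i\<in>UNIV. cnj (u $ i) * v $ i)"

definition outer :: "complex^'n \<Rightarrow> complex^'n \<Rightarrow> complex^'n^'n" where
  "outer u v = (\<chi> i j. u $ i * cnj (v $ j))"

lemma cnj_cinner: "cnj (cinner u v) = cinner v u"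
  by (simp add: cinner_def mult.commute)

lemma cinner_add_left: "cinner (u + v) w = cinner u w + cinner v w"
  by (simp add: cinner_def distrib_right sum.distrib)

lemma cinner_add_right: "cinner u (v + w) = cinner u v + cinner u w"
  by (simp add: cinner_def distrib_left sum.distrib)

lemma cinner_diff_right: "cinner u (v - w) = cinner u v - cinner u w"
  by (simp add: cinner_def right_diff_distrib sum_subtractf)

lemma cinner_scale_left: "cinner (a *s u) v = cnj a * cinner u v"
  by (simp add: cinner_def sum_distrib_left mult.assoc)

lemma cinner_scale_right: "cinner u (a *s v) = a * cinner u v"
  by (simp add: cinner_def sum_distrib_left mult.left_commute)

lemma cinner_zero_left [simp]: "cinner 0 u = 0"
  and cinner_zero_right [simp]: "cinner u 0 = 0"
  by (simp_all add: cinner_def)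

lemma cinner_sum_left: "cinner (\<Sum>x\<in>S. f x) u = (\<Sum>x\<in>S. cinner (f x) u)"
  by (induction S rule: infinite_finite_induct) (auto simp: cinner_add_left)

lemma cinner_sum_right: "cinner u (\<Sum>x\<in>S. f x) = (\<Sum>x\<in>S. cinner u (f x))"
  by (induction S rule: infinite_finite_induct) (auto simp: cinner_add_right)

lemma cnj_mult_self: "cnj a * a = of_real ((cmod a)\<^sup>2)"
  using cmod_power2[of a] by (simp add: complex_eq_iff power2_eq_square)

lemma cinner_self: "cinner v v = of_real ((norm v)\<^sup>2)"
proof -
  have "cinner v v = of_real (\<Sum>i\<in>UNIV. (cmod (v $ i))\<^sup>2)"
    unfolding cinner_def by (simp add: cnj_mult_self)
  then show ?thesis
    by (simp add: norm_vec_def L2_set_def sum_nonneg)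
qed

lemma Re_cinner_self [simp]: "Re (cinner v v) = (norm v)\<^sup>2"
  by (simp add: cinner_self)

lemma cinner_self_eq_0_iff [simp]: "cinner v v = 0 \<longleftrightarrow> v = 0"
  by (simp add: cinner_self)

lemma qform_cinner: "qform A w = cinner w (A *v w)"
  by (simp add: qform_def cinner_def matrix_vector_mult_def sum_distrib_left mult.assoc)

lemma hermitian_cinner_mv:
  assumes "hermitian_mat A"
  shows "cinner (A *v u) v = cinner u (A *v v)"
proof -
  have A: "cnj (A $ j $ i) = A $ i $ j" for i j
    using assms unfolding hermitian_mat_def cmat_adj_def by (metis vec_lambda_beta)
  have "cinner (A *v u) v = (\<Sum>j\<in>UNIV. \<Sum>i\<in>UNIV. cnj (A $ j $ i) * cnj (u $ i) * v $ j)"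
    by (simp add: cinner_def matrix_vector_mult_def sum_distrib_right)
  also have "\<dots> = (\<Sum>i\<in>UNIV. \<Sum>j\<in>UNIV. cnj (u $ i) * A $ i $ j * v $ j)"
    by (subst sum.swap) (simp add: A mult_ac)
  also have "\<dots> = cinner u (A *v v)"
    by (simp add: cinner_def matrix_vector_mult_def sum_distrib_left mult.assoc)
  finally show ?thesis .
qed

lemma hermitian_diff_scaleR:
  "hermitian_mat A \<Longrightarrow> hermitian_mat B \<Longrightarrow> hermitian_mat (A - c *\<^sub>R B)"
  unfolding hermitian_mat_def cmat_adj_def by (simp add: vec_eq_iff)

lemma hermitian_outer_self: "hermitian_mat (outer u u)"
  unfolding hermitian_mat_def cmat_adj_def outer_def by (simp add: vec_eq_iff mult.commute)

lemma hermitian_mat_1: "hermitian_mat (mat 1 :: complex^'n^'n)"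
  unfolding hermitian_mat_def cmat_adj_def by (simp add: vec_eq_iff mat_def)

lemma outer_scale_self: "outer (a *s u) (a *s u) = (cmod a)\<^sup>2 *\<^sub>R outer u u"
proof -
  have "a * x * cnj (a * y) = (cnj a * a) * (x * cnj y)" for x y
    by (simp add: mult_ac)
  also have "\<dots> x y = (cmod a)\<^sup>2 *\<^sub>R (x * cnj y)" for x y
    by (simp only: cnj_mult_self scaleR_conv_of_real)
  finally have "a * x * cnj (a * y) = (cmod a)\<^sup>2 *\<^sub>R (x * cnj y)" for x y .
  then show ?thesis
    by (simp add: outer_def vec_eq_iff del: scaleR_conv_of_real)
qed

lemma outer_self_mv: "outer u u *v r = cinner u r *s u"
  by (simp add: vec_eq_iff matrix_vector_mult_def outer_def cinner_def sum_distrib_left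
      mult_ac)

lemma qform_outer_self: "qform (outer u u) r = of_real ((cmod (cinner u r))\<^sup>2)"
proof -
  have "qform (outer u u) r = cnj (cinner u r) * cinner u r"
    by (simp add: qform_cinner outer_self_mv cinner_scale_right cnj_cinner mult.commute)
  then show ?thesis by (simp add: cnj_mult_self)
qed

lemma scaleR_mv: "(c *\<^sub>R A) *v r = of_real c *s (A *v r)"
  unfolding vec_eq_iff matrix_vector_mult_def
  by (simp add: sum_distrib_left mult.assoc del: scaleR_conv_of_real)
    (simp add: scaleR_conv_of_real)

lemma qform_diff_scaleR: "qform (A - c *\<^sub>R B) r = qform A r - of_real c * qform B r"
proof -
  have "(A - c *\<^sub>R B) *v r = A *v r - of_real c *s (B *v r)"
    by (simp add: matrix_vector_mult_diff_rdistrib scaleR_mv)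
  then show ?thesis
    by (simp add: qform_cinner cinner_diff_right cinner_scale_right)
qed

lemma qform_expand:
  assumes "hermitian_mat A"
  shows "Re (qform A (a *s v + r)) =
     (cmod a)\<^sup>2 * Re (qform A v) + 2 * Re (cnj a * cinner v (A *v r)) + Re (qform A r)"
proof -
  have "cinner r (A *v v) = cnj (cinner v (A *v r))"
    using hermitian_cinner_mv[OF assms, of v r] cnj_cinner[of "A *v v" r] by simp
  have "qform A (a *s v + r) = cnj a * (a * cinner v (A *v v)) + cnj a * cinner v (A *v r)
      + (a * cinner r (A *v v) + cinner r (A *v r))"
    unfolding qform_cinner matrix_vector_right_distrib vector_scalar_commute
    by (simp only: cinner_add_left cinner_add_right cinner_scale_left cinner_scale_right)
      (simp add: algebra_simps)
  also have "\<dots> = of_real ((cmod a)\<^sup>2) * qform A v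
      + (cnj a * cinner v (A *v r) + cnj (cnj a * cinner v (A *v r))) + qform A r"
    by (simp add: \<open>cinner r (A *v v) = _\<close> qform_cinner cnj_mult_self mult.assoc[symmetric])
  finally have "qform A (a *s v + r) = of_real ((cmod a)\<^sup>2) * qform A v
      + (cnj a * cinner v (A *v r) + cnj (cnj a * cinner v (A *v r))) + qform A r" .
  then show ?thesis by (simp add: complex_add_cnj)
qed

lemma qform_scale:
  "hermitian_mat A \<Longrightarrow> Re (qform A (a *s v)) = (cmod a)\<^sup>2 * Re (qform A v)"
  using qform_expand[of A a v 0] by (simp add: qform_cinner)

lemma norm_square_qform: "(norm w)\<^sup>2 = Re (qform (mat 1) w)"
  by (simp add: qform_cinner cinner_self)

lemma norm_square_expand:
  "(norm (a *s v + r))\<^sup>2 = (cmod a)\<^sup>2 * (norm v)\<^sup>2 + 2 * Re (cnj a * cinner v r) + (norm r)\<^sup>2"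
  unfolding norm_square_qform qform_expand[OF hermitian_mat_1] by simp

lemma norm_square_scale: "(norm (a *s v))\<^sup>2 = (cmod a)\<^sup>2 * (norm v)\<^sup>2"
  using norm_square_expand[of a v 0] by simp

lemma psd_mat_qform_nonneg: "psd_mat A \<Longrightarrow> 0 \<le> Re (qform A w)"
  by (simp add: psd_mat_def)

lemma psd_cauchy_schwarz:
  assumes "psd_mat H"
  shows "(cmod (cinner v (H *v r)))\<^sup>2 \<le> Re (qform H v) * Re (qform H r)"
proof -
  define b where "b = cmod (cinner v (H *v r))"
  define p where "p = Re (qform H v)"
  define q where "q = Re (qform H r)"
  have herm: "hermitian_mat H" using assms by (simp add: psd_mat_def)
  \<comment> \<open>nonnegativity of the form along the real line \<open>s \<mapsto> - s b v + r\<close>\<close>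
  have quad: "0 \<le> s\<^sup>2 * b\<^sup>2 * p - 2 * s * b\<^sup>2 + q" for s
  proof -
    let ?a = "- of_real s * cinner v (H *v r)"
    have "0 \<le> Re (qform H (?a *s v + r))"
      using assms by (rule psd_mat_qform_nonneg)
    also have "\<dots> = s\<^sup>2 * b\<^sup>2 * p - 2 * s * b\<^sup>2 + q"
      unfolding qform_expand[OF herm] b_def p_def q_def
      by (simp add: norm_mult power_mult_distrib mult.assoc cnj_mult_self)
    finally show ?thesis .
  qed
  have p0: "0 \<le> p" and q0: "0 \<le> q"
    using assms by (simp_all add: p_def q_def psd_mat_qform_nonneg)
  show ?thesis
  proof (cases "p = 0")
    case True
    have "b\<^sup>2 = 0"
    proof (rule ccontr)
      assume "b\<^sup>2 \<noteq> 0"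
      then have "b\<^sup>2 > 0" by simp
      with quad[of "(q + 1) / b\<^sup>2"] True have "q * b\<^sup>2 + 2 * b\<^sup>2 \<le> 0"
        by (simp add: field_simps)
      moreover have "0 \<le> q * b\<^sup>2" using q0 by simp
      ultimately show False using \<open>b\<^sup>2 > 0\<close> by linarith
    qed
    then show ?thesis using True q0 by (simp add: b_def p_def q_def)
  next
    case False
    with p0 have "p > 0" by simp
    with quad[of "1 / p"] show ?thesis
      by (simp add: field_simps power2_eq_square b_def p_def q_def)
  qed
qed

lemma psd_minus_outer:
  assumes "psd_mat H" "0 \<le> c" "c * Re (qform H v) \<le> 1"
  defines "H' \<equiv> H - c *\<^sub>R outer (H *v v) (H *v v)"
  shows "Re (qform H' r) = Re (qform H r) - c * (cmod (cinner v (H *v r)))\<^sup>2"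
    and "(1 - c * Re (qform H v)) * Re (qform H r) \<le> Re (qform H' r)"
    and "psd_mat H'"
proof -
  have herm: "hermitian_mat H" using assms(1) by (simp add: psd_mat_def)
  show eq: "Re (qform H' r) = Re (qform H r) - c * (cmod (cinner v (H *v r)))\<^sup>2" for r
    unfolding H'_def qform_diff_scaleR qform_outer_self hermitian_cinner_mv[OF herm] by simp
  show ge: "(1 - c * Re (qform H v)) * Re (qform H r) \<le> Re (qform H' r)" for r
    using mult_left_mono[OF psd_cauchy_schwarz[OF assms(1), of v r] assms(2)]
    unfolding eq by (simp add: algebra_simps)
  have "0 \<le> (1 - c * Re (qform H v)) * Re (qform H w)" for w
    using assms(3) psd_mat_qform_nonneg[OF assms(1)] by simp
  then have "0 \<le> Re (qform H' w)" for w
    using ge[of w] by (meson order_trans)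
  then show "psd_mat H'"
    unfolding psd_mat_def H'_def using hermitian_diff_scaleR[OF herm hermitian_outer_self] by blast
qed

section \<open>Rank-one decomposition of a positive semidefinite matrix\<close>

lemma psd_eq_0_if_qform_eq_0:
  assumes "psd_mat X" "\<And>w. Re (qform X w) = 0"
  shows "X = 0"
proof -
  have "cinner (X *v r) (X *v r) = 0" for r
    using psd_cauchy_schwarz[OF assms(1), of "X *v r" r] assms(2) by simp
  then show ?thesis by (simp add: matrix_eq)
qed

lemma nonpos_if_linear_plus_square_nonpos:
  fixes n K :: real
  assumes "\<And>t. 0 < t \<Longrightarrow> 2 * t * n + t\<^sup>2 * K \<le> 0"
  shows "n \<le> 0"
proof (rule ccontr)
  assume "\<not> n \<le> 0"
  define t where "t = n / (\<bar>K\<bar> + 1)"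
  have "t > 0" "t * \<bar>K\<bar> < n"
    using \<open>\<not> n \<le> 0\<close> by (auto simp: t_def field_simps)
  then have "t\<^sup>2 * \<bar>K\<bar> < t * n"
    by (simp add: power2_eq_square)
  moreover have "- (t\<^sup>2 * \<bar>K\<bar>) \<le> t\<^sup>2 * K"
    using mult_left_mono[of "- \<bar>K\<bar>" K "t\<^sup>2"] by simp
  moreover have "t * n > 0"
    using \<open>t > 0\<close> \<open>\<not> n \<le> 0\<close> by simp
  ultimately show False
    using assms[OF \<open>t > 0\<close>] by linarith
qed

lemma rayleigh_maximizer_eigenvector:
  assumes herm: "hermitian_mat X" and u: "norm u = 1" and lu: "Re (qform X u) = l"
    and bound: "\<And>w. Re (qform X w) \<le> l * (norm w)\<^sup>2"
  shows "X *v u = of_real l *s u"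
proof -
  define D where "D = X *v u - of_real l *s u"
  have "cinner D (X *v u - of_real l *s u) = cinner D (X *v u) - of_real l * cinner D u"
    by (simp add: cinner_diff_right cinner_scale_right)
  from arg_cong[OF this, of Re]
  have n: "(norm D)\<^sup>2 = Re (cinner D (X *v u)) - l * Re (cinner D u)"
    unfolding D_def[symmetric] by simp
  \<comment> \<open>compare both sides of \<open>bound\<close> along the ray \<open>u + t D\<close>\<close>
  have "2 * t * Re (cinner D (X *v u)) + t\<^sup>2 * Re (qform X D)
      \<le> l * (2 * t * Re (cinner D u) + t\<^sup>2 * (norm D)\<^sup>2)" for t :: real
    using bound[of "of_real t *s D + u"] lu u
    unfolding qform_expand[OF herm] norm_square_expand by (simp add: algebra_simps)
  moreover have "2 * t * (norm D)\<^sup>2 + t\<^sup>2 * (Re (qform X D) - l * (norm D)\<^sup>2) =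
      2 * t * Re (cinner D (X *v u)) + t\<^sup>2 * Re (qform X D)
      - l * (2 * t * Re (cinner D u) + t\<^sup>2 * (norm D)\<^sup>2)" for t
    by (subst (1) n) (simp add: algebra_simps)
  ultimately have "2 * t * (norm D)\<^sup>2 + t\<^sup>2 * (Re (qform X D) - l * (norm D)\<^sup>2) \<le> 0" for t
    by (simp only: diff_le_0_iff_le)
  then have "(norm D)\<^sup>2 \<le> 0"
    by (rule nonpos_if_linear_plus_square_nonpos)
  then show ?thesis by (simp add: D_def)
qed

lemma psd_top_eigenvector:
  fixes X :: "complex^'n^'n"
  assumes psd: "psd_mat X" and "X \<noteq> 0"
  obtains u l where "norm u = 1" "l > 0" "X *v u = of_real l *s u"
proof -
  have herm: "hermitian_mat X" using psd by (simp add: psd_mat_def)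
  have "continuous_on UNIV (\<lambda>w. Re (qform X w))"
    unfolding qform_def by (intro continuous_intros)
  then obtain u where u: "norm u = 1" and umax: "\<And>y. norm y = 1 \<Longrightarrow> Re (qform X y) \<le> Re (qform X u)"
    using continuous_attains_sup[OF compact_sphere, of 0 1 "\<lambda>w. Re (qform X w)"]
    by (force intro: continuous_on_subset)
  define l where "l = Re (qform X u)"
  have bound: "Re (qform X w) \<le> l * (norm w)\<^sup>2" for w
  proof (cases "w = 0")
    case True then show ?thesis by (simp add: qform_def)
  next
    case False
    define y where "y = of_real (1 / norm w) *s w"
    have "w = of_real (norm w) *s y"
      using False by (simp add: y_def vector_smult_assoc)
    moreover have "(norm y)\<^sup>2 = 1"
      using norm_square_scale[of "of_real (1 / norm w)" w] False
      by (simp add: y_def power_divide norm_divide)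
    then have "norm y = 1"
      by (smt (verit) power2_eq_1_iff norm_ge_zero)
    ultimately show ?thesis
      using umax qform_scale[OF herm, of "of_real (norm w)" y]
      by (simp add: l_def mult_right_mono mult.commute)
  qed
  have "l > 0"
  proof (rule ccontr)
    assume "\<not> l > 0"
    then have "l * (norm w)\<^sup>2 \<le> 0" for w
      by (simp add: mult_nonpos_nonneg)
    then have "Re (qform X w) = 0" for w
      using bound[of w] psd_mat_qform_nonneg[OF psd, of w] by (meson antisym order_trans)
    then show False using psd_eq_0_if_qform_eq_0[OF psd] \<open>X \<noteq> 0\<close> by blast
  qed
  then show ?thesis
    using that u rayleigh_maximizer_eigenvector[OF herm u l_def[symmetric] bound] by blast
qed

lemma outer_sum_mv_member:
  assumes "finite S" "pairwise (\<lambda>u v. cinner u v = 0) S" "v \<in> S"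
  shows "(\<Sum>s\<in>S. outer s s) *v v = of_real ((norm v)\<^sup>2) *s v"
proof -
  have "(\<Sum>s\<in>S. outer s s) *v v = (\<Sum>s\<in>S. cinner s v *s s)"
    by (induction S rule: infinite_finite_induct)
      (simp_all add: matrix_vector_mult_add_rdistrib outer_self_mv)
  also have "\<dots> = cinner v v *s v"
    using assms by (subst sum.remove[of S v]) (auto simp: pairwise_def intro!: sum.neutral)
  finally show ?thesis by (simp add: cinner_self)
qed

lemma psd_deflate:
  fixes X :: "complex^'n^'n"
  assumes psd: "psd_mat X" and "X \<noteq> 0"
  obtains u l where "norm u = 1" "0 < l" "psd_mat (X - l *\<^sub>R outer u u)"
    "(X - l *\<^sub>R outer u u) *v u = 0"
    "{x. X *v x = 0} \<subset> {x. (X - l *\<^sub>R outer u u) *v x = 0}"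
proof -
  have herm: "hermitian_mat X" using psd by (simp add: psd_mat_def)
  obtain u l where u: "norm u = 1" and "l > 0" and eig: "X *v u = of_real l *s u"
    using psd_top_eigenvector[OF assms] .
  define X' where "X' = X - l *\<^sub>R outer u u"
  have X'_mv: "X' *v w = X *v w - of_real l * cinner u w *s u" for w
    by (simp add: X'_def matrix_vector_mult_diff_rdistrib scaleR_mv outer_self_mv
        vector_smult_assoc)
  have cuu: "cinner u u = 1" using u by (simp add: cinner_self)
  have "1 / l * Re (qform X u) \<le> 1"
    using \<open>l > 0\<close> by (simp add: qform_cinner eig cinner_scale_right cuu)
  moreover have "(1 / l) *\<^sub>R outer (X *v u) (X *v u) = l *\<^sub>R outer u u"
    using \<open>l > 0\<close> by (simp add: eig outer_scale_self power2_eq_square)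
  ultimately have "psd_mat X'"
    using psd_minus_outer(3)[OF psd, of "1 / l" u] \<open>l > 0\<close> by (simp add: X'_def)
  moreover have "X' *v u = 0"
    by (simp add: X'_mv eig cuu)
  moreover have "{x. X *v x = 0} \<subset> {x. X' *v x = 0}"
  proof
    have "cinner u w = 0" if "X *v w = 0" for w
      using hermitian_cinner_mv[OF herm, of u w] that \<open>l > 0\<close>
      by (simp add: eig cinner_scale_left)
    then show "{x. X *v x = 0} \<subseteq> {x. X' *v x = 0}"
      by (auto simp: X'_mv)
    have "X *v u \<noteq> 0"
      using u \<open>l > 0\<close> by (auto simp: eig)
    then show "{x. X *v x = 0} \<noteq> {x. X' *v x = 0}"
      using \<open>X' *v u = 0\<close> by blast
  qed
  ultimately show ?thesis
    using that u \<open>l > 0\<close> by (simp add: X'_def)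
qed

lemma psd_outer_decomposition:
  fixes X :: "complex^'n^'n"
  assumes "psd_mat X"
  shows "\<exists>S. finite S \<and> pairwise (\<lambda>u v. cinner u v = 0) S \<and> X = (\<Sum>v\<in>S. outer v v)"
  using assms
proof (induction "CARD('n) - vec.dim {x. X *v x = 0}" arbitrary: X rule: less_induct)
  case less
  show ?case
  proof (cases "X = 0")
    case True
    then show ?thesis by (intro exI[of _ "{}"]) simp
  next
    case False
    obtain u l where u: "norm u = 1" and "0 < l" and psd': "psd_mat (X - l *\<^sub>R outer u u)"
      and X'u: "(X - l *\<^sub>R outer u u) *v u = 0"
      and ker: "{x. X *v x = 0} \<subset> {x. (X - l *\<^sub>R outer u u) *v x = 0}"
      using psd_deflate[OF less.prems False] .
    define X' where "X' = X - l *\<^sub>R outer u u"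
    \<comment> \<open>the induction measure drops because the kernel grows strictly\<close>
    have "vec.dim {x. X *v x = 0} < vec.dim {x. X' *v x = 0}"
      using ker unfolding X'_def
      by (intro vec.dim_psubset) (simp add: vec.span_eq_iff[THEN iffD2, OF vec.subspace_kernel])
    moreover have "vec.dim {x. X' *v x = 0} \<le> CARD('n)"
      by (rule dim_subset_UNIV_cart_gen)
    ultimately obtain S' where "finite S'" and orth': "pairwise (\<lambda>u v. cinner u v = 0) S'"
      and X': "X' = (\<Sum>v\<in>S'. outer v v)"
      using less.hyps[of X'] psd' by (force simp: X'_def)
    \<comment> \<open>each \<open>v \<in> S'\<close> is an eigenvector of the Hermitian \<open>X'\<close>, which kills \<open>u\<close>\<close>
    have u_orth: "cinner u v = 0" if "v \<in> S'" for v
    proof -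
      have "of_real ((norm v)\<^sup>2) * cinner u v = 0"
        using hermitian_cinner_mv[of X' u v] outer_sum_mv_member[OF \<open>finite S'\<close> orth' that] psd' X'u
        by (simp add: X'_def[symmetric] X'[symmetric] cinner_scale_right psd_mat_def)
      then show ?thesis by auto
    qed
    define v0 where "v0 = of_real (sqrt l) *s u"
    have orth_v0: "cinner v0 v = 0" "cinner v v0 = 0" if "v \<in> S'" for v
      using u_orth[OF that] cnj_cinner[of v0 v]
      by (simp_all add: v0_def cinner_scale_left)
    have "v0 \<notin> S'"
      using orth_v0(1)[of v0] \<open>0 < l\<close> u by (auto simp: v0_def)
    have "outer v0 v0 = l *\<^sub>R outer u u"
      using \<open>0 < l\<close> by (simp add: v0_def outer_scale_self)
    then have "X = (\<Sum>v\<in>insert v0 S'. outer v v)"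
      using \<open>finite S'\<close> \<open>v0 \<notin> S'\<close> by (simp add: X'_def flip: X')
    moreover have "pairwise (\<lambda>u v. cinner u v = 0) (insert v0 S')"
      using orth' orth_v0 by (auto simp: pairwise_insert)
    ultimately show ?thesis
      using \<open>finite S'\<close> by blast
  qed
qed

lemma trace_sum: "trace (\<Sum>x\<in>S. f x) = (\<Sum>x\<in>S. trace (f x :: 'a::comm_semiring_1^'n^'n))"
  by (simp add: trace_def sum_component) (rule sum.swap)

lemma trace_outer_self: "trace (outer v v) = cinner v v"
  unfolding trace_def outer_def cinner_def by (simp add: mult.commute)

lemma trace_mult_outer_self: "trace (H ** outer v v) = qform H v"
  unfolding trace_def matrix_matrix_mult_def outer_def qform_def
  by (simp add: sum_distrib_left sum_distrib_right mult_ac)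

lemma trace_outer_sum:
  assumes "X = (\<Sum>v\<in>S. outer v v)"
  shows "Re (trace (H ** X)) = (\<Sum>v\<in>S. Re (qform H v))"
    and "Re (trace X) = (\<Sum>v\<in>S. (norm v)\<^sup>2)"
proof -
  have "H ** X = (\<Sum>v\<in>S. H ** outer v v)"
    unfolding assms by (induction S rule: infinite_finite_induct) (auto simp: matrix_add_ldistrib)
  then show "Re (trace (H ** X)) = (\<Sum>v\<in>S. Re (qform H v))"
    by (simp add: trace_sum trace_mult_outer_self)
  show "Re (trace X) = (\<Sum>v\<in>S. (norm v)\<^sup>2)"
    by (simp add: assms trace_sum trace_outer_self)
qed

lemma norm_square_orthogonal_sum:
  assumes "finite S" "pairwise (\<lambda>u v. cinner u v = 0) S"
  shows "(norm (\<Sum>v\<in>S. c v *s v))\<^sup>2 = (\<Sum>v\<in>S. (cmod (c v))\<^sup>2 * (norm v)\<^sup>2)"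
proof -
  have "cinner (\<Sum>u\<in>S. c u *s u) (\<Sum>v\<in>S. c v *s v) = (\<Sum>v\<in>S. \<Sum>u\<in>S. cnj (c u) * c v * cinner u v)"
    unfolding cinner_sum_left cinner_sum_right cinner_scale_left cinner_scale_right
    by (simp add: sum_distrib_left mult_ac)
  also have "\<dots> = (\<Sum>v\<in>S. cnj (c v) * c v * cinner v v)"
    using assms by (intro sum.cong refl, subst sum.remove) (auto simp: pairwise_def intro!: sum.neutral)
  also have "\<dots> = of_real (\<Sum>v\<in>S. (cmod (c v))\<^sup>2 * (norm v)\<^sup>2)"
    by (simp add: cnj_mult_self cinner_self)
  finally show ?thesis
    using Re_cinner_self[of "\<Sum>v\<in>S. c v *s v"] by simp
qed

section \<open>The standard complex Gaussian\<close>

lemma normal_density_tilt: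
  assumes "0 < c"
  shows "normal_density 0 (sqrt (1 / 2)) x * exp (- ((c - 1) * x\<^sup>2 + 2 * b * x))
       = exp (b\<^sup>2 / c) / sqrt c * normal_density (- b / c) (sqrt (1 / (2 * c))) x"
proof -
  have nd: "normal_density \<mu> (sqrt (1 / (2 * c))) x = sqrt c / sqrt pi * exp (- c * (x - \<mu>)\<^sup>2)"
    if "0 < c" for \<mu> c :: real
    using that by (simp add: normal_density_def real_sqrt_divide real_sqrt_mult field_simps)
  have "normal_density 0 (sqrt (1 / 2)) x * exp (- ((c - 1) * x\<^sup>2 + 2 * b * x))
      = exp (- x\<^sup>2 + - ((c - 1) * x\<^sup>2 + 2 * b * x)) / sqrt pi"
    using nd[of 1 0] by (simp add: mult_exp_exp)
  also have "- x\<^sup>2 + - ((c - 1) * x\<^sup>2 + 2 * b * x) = b\<^sup>2 / c + - c * (x - - b / c)\<^sup>2"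
    using assms by (simp add: field_simps power2_eq_square)
  also have "exp \<dots> / sqrt pi = exp (b\<^sup>2 / c) / sqrt c * (sqrt c / sqrt pi * exp (- c * (x - - b / c)\<^sup>2))"
    using assms by (simp add: mult_exp_exp)
  finally show ?thesis
    by (simp only: nd[OF assms])
qed

lemma nn_integral_normal_density_tilt:
  assumes "0 < c"
  shows "(\<integral>\<^sup>+x. ennreal (normal_density 0 (sqrt (1 / 2)) x * exp (- ((c - 1) * x\<^sup>2 + 2 * b * x))) \<partial>lborel)
       = ennreal (exp (b\<^sup>2 / c) / sqrt c)"
proof -
  let ?N = "normal_density (- b / c) (sqrt (1 / (2 * c)))"
  have "(\<integral>\<^sup>+x. ennreal (?N x) \<partial>lborel) = emeasure (density lborel ?N) UNIV"
    by (simp add: emeasure_density)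
  also have "\<dots> = 1"
    using prob_space.emeasure_space_1[OF prob_space_normal_density, of "sqrt (1 / (2 * c))"] assms
    by simp
  finally have N: "(\<integral>\<^sup>+x. ennreal (?N x) \<partial>lborel) = 1" .
  have "(\<integral>\<^sup>+x. ennreal (normal_density 0 (sqrt (1 / 2)) x * exp (- ((c - 1) * x\<^sup>2 + 2 * b * x))) \<partial>lborel)
      = (\<integral>\<^sup>+x. ennreal (exp (b\<^sup>2 / c) / sqrt c) * ennreal (?N x) \<partial>lborel)"
    unfolding normal_density_tilt[OF assms]
    using assms by (intro nn_integral_cong ennreal_mult) (simp_all add: normal_density_nonneg)
  also have "\<dots> = ennreal (exp (b\<^sup>2 / c) / sqrt c)"
    using N by (simp add: nn_integral_cmult)
  finally show ?thesis .
qed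

text \<open>The circularly symmetric complex Gaussian \<open>CN(0, 1)\<close>: real and imaginary parts are
  independent with distribution \<open>N(0, 1/2)\<close>.\<close>

definition cgauss :: "complex measure" where
  "cgauss = distr
     (density (lborel \<Otimes>\<^sub>M lborel)
        (\<lambda>p. ennreal (normal_density 0 (sqrt (1 / 2)) (fst p) * normal_density 0 (sqrt (1 / 2)) (snd p))))
     borel (\<lambda>p. complex_of_real (fst p) + \<i> * complex_of_real (snd p))"

lemma sets_cgauss [simp]: "sets cgauss = sets borel"
  by (simp add: cgauss_def)

lemma nn_integral_cgauss_exp:
  assumes "-1 < a"
  shows "(\<integral>\<^sup>+z. ennreal (exp (- (a * (cmod z)\<^sup>2 + 2 * Re (cnj z * b)))) \<partial>cgauss)
       = ennreal (exp ((cmod b)\<^sup>2 / (1 + a)) / (1 + a))"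
proof -
  let ?n = "normal_density 0 (sqrt (1 / 2))"
  define g where "g \<beta> x = ?n x * exp (- (a * x\<^sup>2 + 2 * \<beta> * x))" for \<beta> x
  have g_meas [measurable]: "(\<lambda>x. g \<beta> x) \<in> borel_measurable borel" for \<beta>
    unfolding g_def by measurable
  have split: "ennreal (?n (fst p) * ?n (snd p)) *
      ennreal (exp (- (a * (cmod (complex_of_real (fst p) + \<i> * complex_of_real (snd p)))\<^sup>2
         + 2 * Re (cnj (complex_of_real (fst p) + \<i> * complex_of_real (snd p)) * b))))
      = ennreal (g (Re b) (fst p)) * ennreal (g (Im b) (snd p))" for p
    by (simp add: g_def cmod_power2 ennreal_mult[symmetric] normal_density_nonneg
        mult_exp_exp algebra_simps)
  have "(\<integral>\<^sup>+z. ennreal (exp (- (a * (cmod z)\<^sup>2 + 2 * Re (cnj z * b)))) \<partial>cgauss)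
     = (\<integral>\<^sup>+p. ennreal (?n (fst p) * ?n (snd p)) *
      ennreal (exp (- (a * (cmod (complex_of_real (fst p) + \<i> * complex_of_real (snd p)))\<^sup>2
         + 2 * Re (cnj (complex_of_real (fst p) + \<i> * complex_of_real (snd p)) * b)))) \<partial>(lborel \<Otimes>\<^sub>M lborel))"
    by (simp add: cgauss_def nn_integral_distr nn_integral_density)
  also have "\<dots> = (\<integral>\<^sup>+p. ennreal (g (Re b) (fst p)) * ennreal (g (Im b) (snd p)) \<partial>(lborel \<Otimes>\<^sub>M lborel))"
    by (intro nn_integral_cong split)
  also have "\<dots> = (\<integral>\<^sup>+x. ennreal (g (Re b) x) \<partial>lborel) * (\<integral>\<^sup>+y. ennreal (g (Im b) y) \<partial>lborel)"
    by (simp add: lborel.nn_integral_fst[symmetric] nn_integral_cmult nn_integral_multc)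
  also have "\<dots> = ennreal (exp ((Re b)\<^sup>2 / (1 + a)) / sqrt (1 + a))
      * ennreal (exp ((Im b)\<^sup>2 / (1 + a)) / sqrt (1 + a))"
    using nn_integral_normal_density_tilt[of "1 + a"] assms by (simp add: g_def)
  also have "\<dots> = ennreal (exp ((cmod b)\<^sup>2 / (1 + a)) / (1 + a))"
    using assms
    by (simp add: ennreal_mult[symmetric] cmod_power2 mult_exp_exp add_divide_distrib)
  finally show ?thesis .
qed

lemma prob_space_cgauss: "prob_space cgauss"
proof
  show "emeasure cgauss (space cgauss) = 1"
    using nn_integral_cgauss_exp[of 0 0] by simp
qed

section \<open>A Chernoff bound for Gaussian combinations\<close>

definition lincomb :: "(complex^'n) set \<Rightarrow> (complex^'n \<Rightarrow> complex) \<Rightarrow> complex^'n" where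
  "lincomb I \<xi> = (\<Sum>v\<in>I. \<xi> v *s v)"

definition lincomb_norm2 :: "(complex^'n) set \<Rightarrow> (complex^'n \<Rightarrow> complex) \<Rightarrow> real" where
  "lincomb_norm2 I \<xi> = (\<Sum>v\<in>I. (cmod (\<xi> v))\<^sup>2 * (norm v)\<^sup>2)"

definition chernoff_weight ::
  "real \<Rightarrow> real \<Rightarrow> complex^'n^'n \<Rightarrow> (complex^'n) set \<Rightarrow> (complex^'n \<Rightarrow> complex) \<Rightarrow> real" where
  "chernoff_weight l m H I \<xi> = exp (- l * Re (qform H (lincomb I \<xi>)) + m * lincomb_norm2 I \<xi>)"

lemma measurable_chernoff_weight:
  assumes "I \<subseteq> J"
  shows "(\<lambda>\<xi>. ennreal (chernoff_weight l m H I \<xi>)) \<in> borel_measurable (PiM J (\<lambda>_. cgauss))"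
proof -
  have coord [measurable]: "(\<lambda>\<xi>. \<xi> v) \<in> borel_measurable (PiM J (\<lambda>_. cgauss))" if "v \<in> I" for v
    using measurable_component_singleton[of v J "\<lambda>_. cgauss"] that assms
    by (auto simp: measurable_cong_sets[OF refl sets_cgauss])
  have "(\<lambda>z. z *s v) \<in> borel_measurable borel" for v :: "complex^'n"
    by (intro borel_measurable_continuous_onI) (auto simp: vector_scalar_mult_def intro!: continuous_intros)
  then have "lincomb I \<in> borel_measurable (PiM J (\<lambda>_. cgauss))"
    unfolding lincomb_def
    by (intro borel_measurable_sum) (rule measurable_compose[OF coord])
  moreover have "(\<lambda>w. Re (qform H w)) \<in> borel_measurable borel"
    by (intro borel_measurable_continuous_onI) (auto simp: qform_def intro!: continuous_intros)
  ultimately have [measurable]: "(\<lambda>\<xi>. Re (qform H (lincomb I \<xi>))) \<in> borel_measurable (PiM J (\<lambda>_. cgauss))"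
    by (rule measurable_compose)
  have [measurable]: "lincomb_norm2 I \<in> borel_measurable (PiM J (\<lambda>_. cgauss))"
    unfolding lincomb_norm2_def by (intro borel_measurable_sum) simp
  show ?thesis
    unfolding chernoff_weight_def by measurable
qed

lemma nn_integral_chernoff_weight_insert:
  assumes "finite I" "v \<notin> I" and herm: "hermitian_mat H"
    and a: "a = l * Re (qform H v) - m * (norm v)\<^sup>2" "-1 < a"
  defines "H' \<equiv> H - (l / (1 + a)) *\<^sub>R outer (H *v v) (H *v v)"
  shows "(\<integral>\<^sup>+y. ennreal (chernoff_weight l m H (insert v I) (\<xi>(v := y))) \<partial>cgauss)
       = ennreal (1 / (1 + a)) * ennreal (chernoff_weight l m H' I \<xi>)"
proof -
  define r where "r = lincomb I \<xi>"
  define b where "b = cinner v (H *v r)"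
  define E where "E = - l * Re (qform H r) + m * lincomb_norm2 I \<xi>"
  have lincomb_insert: "lincomb (insert v I) (\<xi>(v := y)) = y *s v + r" for y
    using assms(1,2) by (simp add: lincomb_def r_def) (auto intro!: sum.cong)
  have norm2_insert: "lincomb_norm2 (insert v I) (\<xi>(v := y))
      = (cmod y)\<^sup>2 * (norm v)\<^sup>2 + lincomb_norm2 I \<xi>" for y
    using assms(1,2) by (simp add: lincomb_norm2_def) (auto intro!: sum.cong)
  \<comment> \<open>completing the square in the new coordinate \<open>y\<close>\<close>
  have weight: "chernoff_weight l m H (insert v I) (\<xi>(v := y))
      = exp (- (a * (cmod y)\<^sup>2 + 2 * Re (cnj y * (of_real l * b)))) * exp E" for y
    unfolding chernoff_weight_def lincomb_insert norm2_insert qform_expand[OF herm]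
    by (simp add: a E_def b_def mult_exp_exp algebra_simps)
  have H'_r: "Re (qform H' r) = Re (qform H r) - l / (1 + a) * (cmod b)\<^sup>2"
    unfolding H'_def qform_diff_scaleR qform_outer_self hermitian_cinner_mv[OF herm]
    by (simp add: b_def)
  have "(cmod (of_real l * b))\<^sup>2 = l\<^sup>2 * (cmod b)\<^sup>2"
    by (simp add: norm_mult power_mult_distrib)
  then have "(cmod (of_real l * b))\<^sup>2 / (1 + a) + E = - l * Re (qform H' r) + m * lincomb_norm2 I \<xi>"
    unfolding H'_r E_def using a(2) by (simp add: power2_eq_square field_simps)
  then have exp_H': "exp ((cmod (of_real l * b))\<^sup>2 / (1 + a)) * exp E = chernoff_weight l m H' I \<xi>"
    by (simp add: chernoff_weight_def r_def mult_exp_exp)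
  have "(\<integral>\<^sup>+y. ennreal (chernoff_weight l m H (insert v I) (\<xi>(v := y))) \<partial>cgauss)
      = (\<integral>\<^sup>+y. ennreal (exp (- (a * (cmod y)\<^sup>2 + 2 * Re (cnj y * (of_real l * b))))) \<partial>cgauss)
        * ennreal (exp E)"
    unfolding weight ennreal_mult'[OF exp_ge_zero]
    by (rule nn_integral_multc) (simp add: measurable_cong_sets[OF sets_cgauss refl])
  also have "\<dots> = ennreal (exp ((cmod (of_real l * b))\<^sup>2 / (1 + a)) / (1 + a) * exp E)"
    using a(2) by (subst nn_integral_cgauss_exp[OF a(2)], subst ennreal_mult) auto
  also have "\<dots> = ennreal (1 / (1 + a)) * ennreal (chernoff_weight l m H' I \<xi>)"
    using a(2) by (simp add: ennreal_mult[symmetric] exp_H'[symmetric])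
  finally show ?thesis .
qed

lemma chernoff_denominator_step:
  fixes l m h x t t' P :: real
  assumes "0 \<le> l" "0 \<le> m" "0 \<le> h" "0 \<le> x" "0 \<le> t" "m * x < 1" "0 < P"
    and t': "(1 - l / (1 + (l * h - m * x)) * h) * t \<le> t'"
  shows "1 / (1 + (l * h - m * x)) * (1 / (P * (1 + l * t')))
    \<le> 1 / ((1 - m * x) * P * (1 + l * (h + t)))"
proof -
  define a where "a = l * h - m * x"
  have "0 \<le> l * h"
    using assms by simp
  then have "1 + a > 0"
    using assms(6) unfolding a_def by linarith
  then have factor: "(1 + a) * (1 - l / (1 + a) * h) = 1 - m * x"
    by (simp add: a_def field_simps)
  have "(1 + a) * (1 + l * ((1 - l / (1 + a) * h) * t)) \<le> (1 + a) * (1 + l * t')"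
    using t' assms(1) \<open>1 + a > 0\<close> by (simp add: a_def mult_left_mono)
  also have "(1 + a) * (1 + l * ((1 - l / (1 + a) * h) * t))
      = 1 + a + l * ((1 + a) * (1 - l / (1 + a) * h)) * t"
    by (simp add: algebra_simps)
  finally have "1 + a + l * (1 - m * x) * t \<le> (1 + a) * (1 + l * t')"
    unfolding factor .
  moreover have "(1 - m * x) * (1 + l * (h + t)) = 1 + a - m * x * (l * h) + l * (1 - m * x) * t"
    by (simp add: a_def algebra_simps)
  moreover have "0 \<le> m * x * (l * h)"
    using assms by simp
  ultimately have "(1 - m * x) * P * (1 + l * (h + t)) \<le> (1 + a) * (P * (1 + l * t'))"
    using mult_left_mono[of _ _ P] \<open>0 < P\<close> by (simp add: mult_ac)
  moreover have "0 < (1 - m * x) * P * (1 + l * (h + t))"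
    using assms by (simp add: add_pos_nonneg)
  ultimately show ?thesis
    using frac_le[of 1 1] by (simp add: a_def)
qed

lemma product_sigma_finite_cgauss: "product_sigma_finite (\<lambda>_. cgauss)"
  using prob_space_cgauss by (simp add: product_sigma_finite_def prob_space_imp_sigma_finite)

lemma nn_integral_chernoff_weight_le:
  assumes "0 \<le> l" "0 \<le> m"
  shows "finite I \<Longrightarrow> (\<forall>v\<in>I. m * (norm v)\<^sup>2 < 1) \<Longrightarrow> psd_mat H \<Longrightarrow>
    (\<integral>\<^sup>+\<xi>. ennreal (chernoff_weight l m H I \<xi>) \<partial>PiM I (\<lambda>_. cgauss))
      \<le> ennreal (1 / ((\<Prod>v\<in>I. 1 - m * (norm v)\<^sup>2) * (1 + l * (\<Sum>v\<in>I. Re (qform H v)))))"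
proof (induction I arbitrary: H rule: finite_induct)
  case empty
  show ?case
    by (subst product_sigma_finite.nn_integral_empty[OF product_sigma_finite_cgauss])
      (simp_all add: chernoff_weight_def lincomb_def lincomb_norm2_def qform_def)
next
  case (insert v I H)
  have herm: "hermitian_mat H" using insert.prems(2) by (simp add: psd_mat_def)
  define x where "x = (norm v)\<^sup>2"
  define h where "h = Re (qform H v)"
  define a where "a = l * h - m * x"
  define H' where "H' = H - (l / (1 + a)) *\<^sub>R outer (H *v v) (H *v v)"
  define P where "P = (\<Prod>u\<in>I. 1 - m * (norm u)\<^sup>2)"
  define t where "t = (\<Sum>u\<in>I. Re (qform H u))"
  define t' where "t' = (\<Sum>u\<in>I. Re (qform H' u))"
  have "m * x < 1" "0 \<le> h" "0 \<le> x" "0 < P" "0 \<le> t"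
    using insert.prems by (auto simp: x_def h_def P_def t_def psd_mat_qform_nonneg
        intro!: prod_pos sum_nonneg)
  have "0 < 1 + a"
    using \<open>m * x < 1\<close> \<open>0 \<le> h\<close> assms mult_nonneg_nonneg[of l h] unfolding a_def by linarith
  moreover have "l / (1 + a) * h \<le> 1"
    using \<open>m * x < 1\<close> \<open>0 \<le> h\<close> \<open>0 \<le> x\<close> \<open>0 < 1 + a\<close> assms
    by (simp add: a_def field_simps)
  ultimately have H': "psd_mat H'" "(1 - l / (1 + a) * h) * Re (qform H u) \<le> Re (qform H' u)" for u
    using psd_minus_outer(2,3)[OF insert.prems(2), of "l / (1 + a)" v] assms
    by (simp_all add: H'_def h_def)
  have "(1 - l / (1 + a) * h) * t \<le> t'"
    unfolding t_def t'_def sum_distrib_left by (intro sum_mono H'(2))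
  have "(\<integral>\<^sup>+\<xi>. ennreal (chernoff_weight l m H (insert v I) \<xi>) \<partial>PiM (insert v I) (\<lambda>_. cgauss))
      = (\<integral>\<^sup>+\<xi>. (\<integral>\<^sup>+y. ennreal (chernoff_weight l m H (insert v I) (\<xi>(v := y))) \<partial>cgauss)
          \<partial>PiM I (\<lambda>_. cgauss))"
    using insert.hyps
    by (intro product_sigma_finite.product_nn_integral_insert[OF product_sigma_finite_cgauss])
      (simp_all add: measurable_chernoff_weight)
  also have "\<dots> = ennreal (1 / (1 + a)) * (\<integral>\<^sup>+\<xi>. ennreal (chernoff_weight l m H' I \<xi>) \<partial>PiM I (\<lambda>_. cgauss))"
    using nn_integral_chernoff_weight_insert[OF insert.hyps herm, of a l m] \<open>0 < 1 + a\<close>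
    by (simp add: a_def h_def x_def H'_def nn_integral_cmult measurable_chernoff_weight)
  also have "\<dots> \<le> ennreal (1 / (1 + a)) * ennreal (1 / (P * (1 + l * t')))"
    using insert.IH[OF _ H'(1)] insert.prems(1) by (intro mult_left_mono) (auto simp: P_def t'_def)
  also have "\<dots> = ennreal (1 / (1 + a) * (1 / (P * (1 + l * t'))))"
    using \<open>0 < 1 + a\<close> by (intro ennreal_mult'[symmetric]) simp
  also have "\<dots> \<le> ennreal (1 / ((1 - m * x) * P * (1 + l * (h + t))))"
    using chernoff_denominator_step[OF assms \<open>0 \<le> h\<close> \<open>0 \<le> x\<close> \<open>0 \<le> t\<close> \<open>m * x < 1\<close> \<open>0 < P\<close>]
      \<open>(1 - l / (1 + a) * h) * t \<le> t'\<close>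
    by (intro ennreal_leI) (simp add: a_def)
  finally show ?case
    using insert.hyps by (simp add: P_def t_def x_def h_def mult_ac)
qed

lemma weierstrass_product_inequality:
  fixes y :: "'a \<Rightarrow> real"
  assumes "finite S" "\<And>v. v \<in> S \<Longrightarrow> 0 \<le> y v \<and> y v \<le> 1"
  shows "1 - (\<Sum>v\<in>S. y v) \<le> (\<Prod>v\<in>S. 1 - y v)"
  using assms
proof (induction S rule: finite_induct)
  case (insert x F)
  have "1 - (y x + (\<Sum>v\<in>F. y v)) \<le> (1 - y x) * (1 - (\<Sum>v\<in>F. y v))"
    using insert.prems by (simp add: algebra_simps sum_nonneg)
  also have "\<dots> \<le> (1 - y x) * (\<Prod>v\<in>F. 1 - y v)"
    using insert by (intro mult_left_mono) auto
  finally show ?case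
    using insert.hyps by simp
qed simp

lemma nn_integral_chernoff_weight_le_4a:
  assumes S: "finite S" and "psd_mat H"
    and T: "T = (\<Sum>v\<in>S. (norm v)\<^sup>2)" "0 < T"
    and t: "t = (\<Sum>v\<in>S. Re (qform H v))" "0 < t" and "0 < a"
  shows "(\<integral>\<^sup>+\<xi>. ennreal (chernoff_weight (1 / (2 * a * t)) (1 / (2 * T)) H S \<xi>) \<partial>PiM S (\<lambda>_. cgauss))
    \<le> ennreal (4 * a)"
proof -
  define P where "P = (\<Prod>v\<in>S. 1 - 1 / (2 * T) * (norm v)\<^sup>2)"
  have small: "1 / (2 * T) * (norm v)\<^sup>2 \<le> 1 / 2" if "v \<in> S" for v
  proof -
    have "(norm v)\<^sup>2 \<le> T"
      unfolding T(1) using S that by (intro member_le_sum) auto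
    then show ?thesis using T(2) by (simp add: field_simps)
  qed
  have "1 - (\<Sum>v\<in>S. 1 / (2 * T) * (norm v)\<^sup>2) \<le> P"
    unfolding P_def
  proof (rule weierstrass_product_inequality[OF S])
    fix v assume "v \<in> S"
    then show "0 \<le> 1 / (2 * T) * (norm v)\<^sup>2 \<and> 1 / (2 * T) * (norm v)\<^sup>2 \<le> 1"
      using small[of v] T(2) by simp
  qed
  moreover have "(\<Sum>v\<in>S. 1 / (2 * T) * (norm v)\<^sup>2) = 1 / 2"
    using T(2) by (simp add: T(1)[symmetric] flip: sum_divide_distrib)
  ultimately have "1 / 2 \<le> P" by simp
  have "1 / (4 * a) \<le> 1 / 2 * (1 + 1 / (2 * a))"
    using \<open>0 < a\<close> by (simp add: field_simps)
  also have "\<dots> \<le> P * (1 + 1 / (2 * a))"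
    using \<open>1 / 2 \<le> P\<close> \<open>0 < a\<close> by (intro mult_right_mono) auto
  finally have "1 / (P * (1 + 1 / (2 * a))) \<le> 4 * a"
    using frac_le[of 1 1 "1 / (4 * a)" "P * (1 + 1 / (2 * a))"] \<open>0 < a\<close> by simp
  have "1 / (2 * a * t) * (\<Sum>v\<in>S. Re (qform H v)) = 1 / (2 * a)"
    using t by simp
  then have "(\<integral>\<^sup>+\<xi>. ennreal (chernoff_weight (1 / (2 * a * t)) (1 / (2 * T)) H S \<xi>) \<partial>PiM S (\<lambda>_. cgauss))
      \<le> ennreal (1 / (P * (1 + 1 / (2 * a))))"
    using nn_integral_chernoff_weight_le[OF _ _ S _ \<open>psd_mat H\<close>, of "1 / (2 * a * t)" "1 / (2 * T)"]
      small \<open>0 < a\<close> t(2) T(2)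
    unfolding P_def by fastforce
  also have "\<dots> \<le> ennreal (4 * a)"
    by (rule ennreal_leI) fact
  finally show ?thesis .
qed

lemma exists_sample_forms_large:
  fixes S :: "(complex^'n) set" and H :: "nat \<Rightarrow> complex^'n^'n"
  assumes S: "finite S" and H: "\<forall>i<M. psd_mat (H i)"
    and t: "\<forall>i<M. t i = (\<Sum>v\<in>S. Re (qform (H i) v)) \<and> 0 < t i"
    and T: "T = (\<Sum>v\<in>S. (norm v)\<^sup>2)" "0 < T"
    and a: "\<forall>i<M. 0 < a i" "(\<Sum>i<M. 4 * a i) < 1"
  shows "\<exists>\<xi>. \<forall>i<M. a i * t i / T * lincomb_norm2 S \<xi> < Re (qform (H i) (lincomb S \<xi>))"
proof (rule ccontr)
  assume bad: "\<not> ?thesis"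
  define F where "F i \<xi> = ennreal (chernoff_weight (1 / (2 * a i * t i)) (1 / (2 * T)) (H i) S \<xi>)" for i \<xi>
  interpret prob_space "PiM S (\<lambda>_. cgauss)"
    by (intro prob_space_PiM prob_space_cgauss)
  \<comment> \<open>each violated constraint has Chernoff weight at least one, so their expected number is \<open>< 1\<close>\<close>
  have one_le: "1 \<le> (\<Sum>i<M. F i \<xi>)" for \<xi>
  proof -
    obtain i where i: "i < M" and "Re (qform (H i) (lincomb S \<xi>)) \<le> a i * t i / T * lincomb_norm2 S \<xi>"
      using bad by (meson not_less)
    moreover have "0 < a i" "0 < t i"
      using i a(1) t by auto
    ultimately have "1 / (2 * a i * t i) * Re (qform (H i) (lincomb S \<xi>)) \<le> 1 / (2 * T) * lincomb_norm2 S \<xi>"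
      using T(2) by (simp add: field_simps)
    then have "1 \<le> F i \<xi>"
      by (simp add: F_def chernoff_weight_def flip: ennreal_1)
    also have "\<dots> \<le> (\<Sum>i<M. F i \<xi>)"
      using i by (intro member_le_sum) auto
    finally show ?thesis .
  qed
  have "(1::ennreal) = (\<integral>\<^sup>+\<xi>. 1 \<partial>PiM S (\<lambda>_. cgauss))"
    by (simp add: emeasure_space_1)
  also have "\<dots> \<le> (\<integral>\<^sup>+\<xi>. (\<Sum>i<M. F i \<xi>) \<partial>PiM S (\<lambda>_. cgauss))"
    by (intro nn_integral_mono one_le)
  also have "\<dots> = (\<Sum>i<M. \<integral>\<^sup>+\<xi>. F i \<xi> \<partial>PiM S (\<lambda>_. cgauss))"
    by (intro nn_integral_sum) (simp add: F_def measurable_chernoff_weight)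
  also have "\<dots> \<le> (\<Sum>i<M. ennreal (4 * a i))"
    unfolding F_def using nn_integral_chernoff_weight_le_4a[OF S] H t T a(1)
    by (intro sum_mono) auto
  also have "\<dots> = ennreal (\<Sum>i<M. 4 * a i)"
    using a(1) by (intro sum_ennreal) (simp add: less_imp_le)
  finally have "ennreal 1 \<le> ennreal (\<Sum>i<M. 4 * a i)"
    by simp
  then show False
    using a by (subst (asm) ennreal_le_iff) (auto intro!: sum_nonneg simp: less_imp_le)
qed

section \<open>Gaussian randomization of an SDP solution\<close>

lemma psd_trace_pos:
  assumes "psd_mat X" "0 < Re (trace (H ** X))"
  shows "0 < Re (trace X)"
proof -
  obtain S where S: "finite S" and X_eq: "X = (\<Sum>v\<in>S. outer v v)"
    using psd_outer_decomposition[OF assms(1)] by blast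
  have "Re (trace X) \<noteq> 0"
  proof
    assume "Re (trace X) = 0"
    then have "\<forall>v\<in>S. v = 0"
      using S by (simp add: trace_outer_sum(2)[OF X_eq] sum_nonneg_eq_0_iff)
    then have "Re (trace (H ** X)) = 0"
      by (auto simp: trace_outer_sum(1)[OF X_eq] qform_def intro!: sum.neutral)
    then show False
      using assms(2) by simp
  qed
  moreover have "0 \<le> Re (trace X)"
    by (simp add: trace_outer_sum(2)[OF X_eq] sum_nonneg)
  ultimately show ?thesis by simp
qed

lemma exists_vector_forms_large:
  fixes X :: "complex^'n^'n" and H :: "nat \<Rightarrow> complex^'n^'n"
  assumes X: "psd_mat X" and H: "\<forall>i<M. psd_mat (H i)" and "0 < M"
    and HX: "\<forall>i<M. 0 < Re (trace (H i ** X))"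
    and a: "\<forall>i<M. 0 < a i" "(\<Sum>i<M. 4 * a i) < 1"
  shows "\<exists>w. \<forall>i<M. a i * Re (trace (H i ** X)) / Re (trace X) * (norm w)\<^sup>2 < Re (qform (H i) w)"
proof -
  obtain S where S: "finite S" and orth: "pairwise (\<lambda>u v. cinner u v = 0) S"
    and X_eq: "X = (\<Sum>v\<in>S. outer v v)"
    using psd_outer_decomposition[OF X] by blast
  have T: "0 < Re (trace X)"
    using psd_trace_pos[OF X] HX \<open>0 < M\<close> by blast
  have t: "\<forall>i<M. Re (trace (H i ** X)) = (\<Sum>v\<in>S. Re (qform (H i) v)) \<and> 0 < Re (trace (H i ** X))"
    using HX by (simp add: trace_outer_sum(1)[OF X_eq])
  obtain \<xi> where \<xi>:
    "\<forall>i<M. a i * Re (trace (H i ** X)) / Re (trace X) * lincomb_norm2 S \<xi> < Re (qform (H i) (lincomb S \<xi>))"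
    using exists_sample_forms_large[OF S H t trace_outer_sum(2)[OF X_eq] T a] ..
  moreover have "lincomb_norm2 S \<xi> = (norm (lincomb S \<xi>))\<^sup>2"
    unfolding lincomb_def lincomb_norm2_def by (rule norm_square_orthogonal_sum[OF S orth, symmetric])
  ultimately show ?thesis
    by (intro exI[of _ "lincomb S \<xi>"]) simp
qed

lemma gaussian_randomization:
  fixes X :: "complex^'n^'n" and H :: "nat \<Rightarrow> complex^'n^'n"
  assumes X: "psd_mat X" and H: "\<forall>i<M. psd_mat (H i)" and "0 < M"
    and HX: "\<forall>i<M. 0 < Re (trace (H i ** X))"
    and d: "\<forall>i<M. 0 < d i" and \<mu>: "8 * (\<Sum>i<M. d i) \<le> \<mu>"
  shows "\<exists>w. (norm w)\<^sup>2 = \<mu> * Re (trace X) \<and> (\<forall>i<M. d i * Re (trace (H i ** X)) < Re (qform (H i) w))"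
proof -
  have T: "0 < Re (trace X)"
    using psd_trace_pos[OF X] HX \<open>0 < M\<close> by blast
  have "0 < (\<Sum>i<M. d i)"
    using d \<open>0 < M\<close> by (intro sum_pos) auto
  then have "0 < \<mu>"
    using \<mu> by linarith
  define a where "a i = d i / \<mu>" for i
  have a_pos: "\<forall>i<M. 0 < a i"
    using d \<open>0 < \<mu>\<close> by (simp add: a_def)
  have "(\<Sum>i<M. 4 * a i) = 4 * (\<Sum>i<M. d i) / \<mu>"
    by (simp add: a_def sum_distrib_left sum_divide_distrib)
  also have "\<dots> < 1"
    using \<mu> \<open>0 < \<mu>\<close> \<open>0 < (\<Sum>i<M. d i)\<close> by (simp add: field_simps)
  finally obtain w where
    w: "\<forall>i<M. a i * Re (trace (H i ** X)) / Re (trace X) * (norm w)\<^sup>2 < Re (qform (H i) w)"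
    using exists_vector_forms_large[OF X H \<open>0 < M\<close> HX a_pos] by blast
  have "w \<noteq> 0"
  proof
    assume "w = 0"
    then show False
      using w[rule_format, OF \<open>0 < M\<close>] by (simp add: qform_def)
  qed
  define s where "s = sqrt (\<mu> * Re (trace X)) / norm w"
  have s2: "s\<^sup>2 * (norm w)\<^sup>2 = \<mu> * Re (trace X)"
    using \<open>0 < \<mu>\<close> T \<open>w \<noteq> 0\<close> by (simp add: s_def power_divide)
  show ?thesis
  proof (intro exI conjI allI impI)
    show "(norm (of_real s *s w))\<^sup>2 = \<mu> * Re (trace X)"
      using s2 by (simp add: norm_square_scale)
    fix i assume "i < M"
    have "d i * Re (trace (H i ** X))
        = s\<^sup>2 * (a i * Re (trace (H i ** X)) / Re (trace X) * (norm w)\<^sup>2)"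
      using s2 \<open>0 < \<mu>\<close> T by (simp add: a_def field_simps)
    also have "\<dots> < s\<^sup>2 * Re (qform (H i) w)"
    proof (rule mult_strict_left_mono)
      show "a i * Re (trace (H i ** X)) / Re (trace X) * (norm w)\<^sup>2 < Re (qform (H i) w)"
        using w \<open>i < M\<close> by blast
      show "0 < s\<^sup>2"
        using s2 \<open>0 < \<mu>\<close> T by (cases "s = 0") auto
    qed
    also have "\<dots> = Re (qform (H i) (of_real s *s w))"
      using H \<open>i < M\<close> by (simp add: qform_scale psd_mat_def)
    finally show "d i * Re (trace (H i ** X)) < Re (qform (H i) (of_real s *s w))" .
  qed
qed

section \<open>From the relaxation back to (P1)\<close>

text \<open>If fewer than \<open>Q\<close> entries of \<open>\<beta>\<close> reached \<open>1/(M - Q + 1)\<close>, the others could not make up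
  the sum \<open>Q\<close>; where \<open>\<beta>\<^sub>i \<ge> 1/(M - Q + 1)\<close>, the constraint gives \<open>t\<^sub>i \<ge> c(\<epsilon>)\<close>.\<close>

lemma exists_subset_c_eps_le:
  fixes \<beta> t :: "nat \<Rightarrow> real"
  assumes "Q \<le> M" "\<epsilon> < 1"
    and \<beta>: "\<forall>i<M. 0 \<le> \<beta> i \<and> \<beta> i \<le> 1" "(\<Sum>i<M. \<beta> i) = real Q"
    and t: "\<forall>i<M. \<beta> i + (1 - \<beta> i) * \<epsilon> \<le> t i"
  shows "\<exists>Sel\<subseteq>{..<M}. card Sel = Q \<and> (\<forall>i\<in>Sel. c_eps M Q \<epsilon> \<le> t i)"
proof -
  define k where "k = real M - real Q + 1"
  define A where "A = {i\<in>{..<M}. c_eps M Q \<epsilon> \<le> t i}"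
  define B where "B = {..<M} - A"
  have "1 \<le> k" using assms(1) by (simp add: k_def)
  show ?thesis
  proof (cases "Q \<le> card A")
    case True
    then obtain Sel where "Sel \<subseteq> A" "card Sel = Q"
      by (metis obtain_subset_with_card_n)
    then show ?thesis unfolding A_def by auto
  next
    case False
    have "A \<subseteq> {..<M}" by (auto simp: A_def)
    then have "card B = M - card A" "card A \<le> M"
      using card_mono[of "{..<M}" A] by (auto simp: B_def card_Diff_subset finite_subset)
    then have card_B: "real (card B) = real M - real (card A)"
      by simp
    have "B \<noteq> {}"
      using False assms(1) card_B by auto
    have "\<beta> i < 1 / k" if "i \<in> B" for i
    proof -
      have "\<beta> i + (1 - \<beta> i) * \<epsilon> < \<epsilon> + (1 - \<epsilon>) / k"
        using that t by (force simp: B_def A_def c_eps_def k_def)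
      then have "\<beta> i * (1 - \<epsilon>) < (1 / k) * (1 - \<epsilon>)"
        by (simp add: algebra_simps)
      then show ?thesis
        by (rule mult_right_less_imp_less) (use assms(2) in simp)
    qed
    then have "(\<Sum>i\<in>B. \<beta> i) < real (card B) / k"
      using \<open>B \<noteq> {}\<close> sum_strict_mono[of B \<beta> "\<lambda>_. 1 / k"] by (simp add: B_def)
    moreover have "(\<Sum>i\<in>A. \<beta> i) \<le> real (card A)"
      using \<beta>(1) sum_mono[of A \<beta> "\<lambda>_. 1"] by (simp add: A_def)
    moreover have "real Q = (\<Sum>i\<in>A. \<beta> i) + (\<Sum>i\<in>B. \<beta> i)"
      using \<beta>(2) \<open>A \<subseteq> {..<M}\<close> by (simp add: B_def sum.subset_diff[of A "{..<M}"])
    \<comment> \<open>\<open>(M - |A|) / k \<le> Q - |A|\<close> because \<open>(Q - |A|) k - (M - |A|) = (Q - |A| - 1)(M - Q)\<close>\<close>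
    moreover have "real (card B) / k \<le> real Q - real (card A)"
    proof -
      have "(real Q - real (card A) - 1) * (real M - real Q) \<ge> 0"
        using False assms(1) by simp
      then have "real M - real (card A) \<le> (real Q - real (card A)) * k"
        by (simp add: k_def algebra_simps)
      then show ?thesis
        using \<open>1 \<le> k\<close> card_B by (simp add: divide_le_eq)
    qed
    ultimately show ?thesis by linarith
  qed
qed

lemma c_eps_pos: "Q \<le> M \<Longrightarrow> 0 < \<epsilon> \<Longrightarrow> \<epsilon> < 1 \<Longrightarrow> 0 < c_eps M Q \<epsilon>"
  by (simp add: c_eps_def add_pos_nonneg)

lemma v_QP_le_norm:
  assumes Sel: "Sel \<subseteq> {..<M}" "card Sel = Q"
    and "\<forall>i\<in>Sel. 1 \<le> Re (qform (H i) w)" "\<forall>i<M. \<epsilon> \<le> Re (qform (H i) w)"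
  shows "v_QP M Q \<epsilon> H \<le> ereal ((norm w)\<^sup>2)"
proof -
  define \<beta> where "\<beta> i = (if i \<in> Sel then 1 else 0 :: real)" for i
  have "\<forall>i<M. \<beta> i \<in> {0, 1}"
    by (simp add: \<beta>_def)
  moreover have "\<forall>i<M. \<beta> i + (1 - \<beta> i) * \<epsilon> \<le> Re (qform (H i) w)"
    using assms(3,4) by (simp add: \<beta>_def)
  moreover have "(\<Sum>i<M. \<beta> i) = real Q"
    using Sel by (simp add: \<beta>_def sum.If_cases Int_absorb1)
  ultimately have "ereal ((norm w)\<^sup>2) \<in> {ereal ((norm w)\<^sup>2) | w \<beta>.
      (\<forall>i<M. \<beta> i \<in> {0,1}) \<and> (\<forall>i<M. Re (qform (H i) w) \<ge> \<beta> i + (1 - \<beta> i) * \<epsilon>) \<and>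
      (\<Sum>i<M. \<beta> i) = real Q}"
    by blast
  then show ?thesis
    unfolding v_QP_def by (rule Inf_lower)
qed

lemma v_QP_le_SDP2_feasible:
  fixes H :: "nat \<Rightarrow> complex^'n^'n" and X :: "complex^'n^'n"
  assumes "Q \<le> M" "0 < M" "0 < \<epsilon>" "\<epsilon> < 1" and H: "\<forall>i<M. psd_mat (H i)" and X: "psd_mat X"
    and cons: "\<forall>i<M. \<beta> i + (1 - \<beta> i) * \<epsilon> \<le> Re (trace (H i ** X))"
    and \<beta>: "(\<Sum>i<M. \<beta> i) = real Q" "\<forall>i<M. 0 \<le> \<beta> i \<and> \<beta> i \<le> 1"
  shows "v_QP M Q \<epsilon> H \<le> ereal (mu_C M Q \<epsilon> * Re (trace X))"
proof -
  define c where "c = c_eps M Q \<epsilon>"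
  have "0 < c" using c_eps_pos assms(1,3,4) by (simp add: c_def)
  obtain Sel where Sel: "Sel \<subseteq> {..<M}" "card Sel = Q" and large: "\<forall>i\<in>Sel. c \<le> Re (trace (H i ** X))"
    using exists_subset_c_eps_le[OF assms(1,4) \<beta>(2,1) cons] by (auto simp: c_def)
  have eps_le: "\<epsilon> \<le> Re (trace (H i ** X))" if "i < M" for i
  proof -
    have "0 \<le> \<beta> i * (1 - \<epsilon>)"
      using \<beta>(2) that assms(4) by simp
    moreover have "\<beta> i + (1 - \<beta> i) * \<epsilon> = \<epsilon> + \<beta> i * (1 - \<epsilon>)"
      by (simp add: algebra_simps)
    ultimately show ?thesis
      using cons[rule_format, OF that] by linarith
  qed
  \<comment> \<open>the weights \<open>d\<close> are where \<open>\<mu>\<^sub>\<complex>\<close> comes from: \<open>8 \<Sum>d = 8 (M - Q + Q / c(\<epsilon>))\<close>\<close>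
  define d where "d i = (if i \<in> Sel then 1 / c else 1)" for i
  have "card ({..<M} \<inter> - Sel) = M - Q"
    using Sel by (simp add: card_Diff_subset finite_subset flip: Diff_eq)
  then have "(\<Sum>i<M. d i) = real Q / c + (real M - real Q)"
    using Sel \<open>Q \<le> M\<close> by (simp add: d_def sum.If_cases Int_absorb1)
  then have "8 * (\<Sum>i<M. d i) \<le> mu_C M Q \<epsilon>"
    by (simp add: mu_C_def c_def)
  moreover have "\<forall>i<M. 0 < Re (trace (H i ** X))" "\<forall>i<M. 0 < d i"
    using eps_le \<open>0 < \<epsilon>\<close> \<open>0 < c\<close> by (auto simp: d_def intro: less_le_trans)
  ultimately obtain w where w: "(norm w)\<^sup>2 = mu_C M Q \<epsilon> * Re (trace X)"
    and w_forms: "\<forall>i<M. d i * Re (trace (H i ** X)) < Re (qform (H i) w)"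
    using gaussian_randomization[OF X H \<open>0 < M\<close>] by blast
  have one_le: "1 \<le> Re (qform (H i) w)" if "i \<in> Sel" for i
  proof -
    have "1 \<le> d i * Re (trace (H i ** X))"
      using large that \<open>0 < c\<close> by (simp add: d_def field_simps)
    then show ?thesis
      using w_forms that Sel(1) by force
  qed
  moreover have "\<epsilon> \<le> Re (qform (H i) w)" if "i < M" for i
  proof (cases "i \<in> Sel")
    case True
    then show ?thesis
      using one_le[OF True] assms(4) by simp
  next
    case False
    then show ?thesis
      using w_forms[rule_format, OF that] eps_le[OF that] by (simp add: d_def)
  qed
  ultimately have "v_QP M Q \<epsilon> H \<le> ereal ((norm w)\<^sup>2)"
    by (intro v_QP_le_norm[OF Sel]) auto
  then show ?thesis
    by (simp only: w)
qed

lemma le_ereal_mult_Inf: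
  fixes B :: "ereal set"
  assumes "0 < \<mu>" and "\<And>y. y \<in> B \<Longrightarrow> a \<le> ereal \<mu> * y"
  shows "a \<le> ereal \<mu> * Inf B"
proof -
  have "ereal (1 / \<mu>) * a \<le> Inf B"
  proof (rule Inf_greatest)
    fix y assume "y \<in> B"
    then have "ereal (1 / \<mu>) * a \<le> ereal (1 / \<mu>) * (ereal \<mu> * y)"
      using assms by (intro ereal_mult_left_mono) auto
    then show "ereal (1 / \<mu>) * a \<le> y"
      using \<open>0 < \<mu>\<close> by (simp add: mult.assoc[symmetric])
  qed
  then have "ereal \<mu> * (ereal (1 / \<mu>) * a) \<le> ereal \<mu> * Inf B"
    using \<open>0 < \<mu>\<close> by (intro ereal_mult_left_mono) auto
  then show ?thesis
    using \<open>0 < \<mu>\<close> by (simp add: mult.assoc[symmetric])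
qed

theorem theorem2p6:
  fixes H :: "nat \<Rightarrow> complex^'n^'n" and M Q :: nat and \<epsilon> :: real
  assumes "CARD('n) \<ge> 2" and "M \<ge> 2" and "1 \<le> Q" and "Q \<le> M - 1"
    and "0 < \<epsilon>" and "\<epsilon> < 1"
    and "\<forall>i<M. psd_mat (H i)"
  shows "v_QP M Q \<epsilon> H \<le> ereal (mu_C M Q \<epsilon>) * v_SDP2 M Q \<epsilon> H"
proof -
  have "Q \<le> M" "0 < M"
    using assms(2,4) by auto
  have "0 < c_eps M Q \<epsilon>"
    using c_eps_pos \<open>Q \<le> M\<close> assms(5,6) .
  then have "0 < mu_C M Q \<epsilon>"
    using assms(4) \<open>0 < M\<close> by (simp add: mu_C_def max.strict_coboundedI1 add_pos_nonneg)
  then show ?thesis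
    unfolding v_SDP2_def
    using v_QP_le_SDP2_feasible[OF \<open>Q \<le> M\<close> \<open>0 < M\<close> assms(5-7)]
    by (intro le_ereal_mult_Inf) auto
qed

end
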